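(* Let $q=2^f$ with $f\ge4$, let $q_0<q$ be a power of $2$ with $\gcd(q-1,q_0^2-1)=1$, let $u\in\mathbb{F}_q\setminus\{0,1\}$, and define $\eta=1+\left(\frac{u}{u+1}\right)^{1/(q_0-1)}$. Then for all $a,b\in\mathbb{F}_q^*$: (1) $\Phi_{a,ua^{q_0+1}}\xrightarrow{u}\Phi_{b,ub^{q_0+1}}$ iff $b=a/\eta$; (2) $\Phi_{a,ua^{q_0+1}}\xrightarrow{u+1}\Phi_{b,ub^{q_0+1}}$ iff $b=a\eta$; (3) $\Phi_{a,(u+1)a^{q_0+1}}\xrightarrow{u}\Phi_{b,(u+1)b^{q_0+1}}$ iff $b=a\cdot\frac{\eta}{1+\eta}$; (4) $\Phi_{a,(u+1)a^{q_0+1}}\xrightarrow{u+1}\Phi_{b,(u+1)b^{q_0+1}}$ iff $b=a\cdot\frac{1+\eta}{\eta}$; (5) $\Phi_{a,ua^{q_0+1}}\xrightarrow{u}\Phi_{b,(u+1)b^{q_0+1}}$ iff $b=\frac{a}{1+\eta}$; (6) $\Phi_{a,ua^{q_0+1}}\xrightarrow{u+1}\Phi_{b,(u+1)b^{q_0+1}}$ iff $\left(\frac ab\right)^{q_0+1}+u\left(\frac ab\right)^{q_0}+(u+1)\frac ab+1=0$.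
   Context: For $a,c\in\mathbb{F}_q$ let $\Phi_{a,c}=\begin{bmatrix}1&0&0\\ a&1&0\\ c&a^{q_0}&1\end{bmatrix}$, $K=\{\Phi_{a,c}\}\le GL(3,\mathbb{F}_q)$, and for $v\in\mathbb{F}_q$ let $\Omega_v=\{\Phi_{a,va^{q_0+1}}: a\in\mathbb{F}_q^*\}$. For $x,y\in K$ and $v\in\mathbb{F}_q$ write $x\xrightarrow{v}y$ if $xy^{-1}\in\Omega_v$. The $(q_0-1)$-th root is the inverse of the bijection $x\mapsto x^{q_0-1}$ of $\mathbb{F}_q$ (a bijection since $\gcd(q_0-1,q-1)=1$). *)

theory Defs
  imports "HOL-Analysis.Analysis"
begin

definition Phi :: "nat \<Rightarrow> 'a::field \<Rightarrow> 'a \<Rightarrow> 'a^3^3" where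
  "Phi q0 a c = vector [vector [1, 0, 0], vector [a, 1, 0], vector [c, a ^ q0, 1]]"

definition Kgrp :: "nat \<Rightarrow> ('a::field^3^3) set" where
  "Kgrp q0 = {Phi q0 a c | a c. True}"

definition Omega :: "nat \<Rightarrow> 'a::field \<Rightarrow> ('a^3^3) set" where
  "Omega q0 v = {Phi q0 a (v * a ^ (q0 + 1)) | a. a \<noteq> 0}"

definition arrow :: "nat \<Rightarrow> 'a::field \<Rightarrow> 'a^3^3 \<Rightarrow> 'a^3^3 \<Rightarrow> bool" where
  "arrow q0 v x y \<longleftrightarrow> x ** matrix_inv y \<in> Omega q0 v"

definition root_q0 :: "nat \<Rightarrow> 'a::field \<Rightarrow> 'a" where
  "root_q0 q0 x = (THE y. y ^ (q0 - 1) = x)"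

end

theory Submission
  imports Defs
begin

text \<open>In characteristic 2, and with \<open>x \<mapsto> x ^ q0\<close> additive, the matrices multiply as
  \<open>Phi q0 a c ** Phi q0 b d = Phi q0 (a + b) (c + d + a ^ q0 * b)\<close>. Hence, for \<open>x = a / b\<close>, an
  arrow labelled \<open>v\<close> from \<open>Phi q0 a (s * a ^ (q0 + 1))\<close> to \<open>Phi q0 b (r * b ^ (q0 + 1))\<close>
  amounts to \<open>x \<noteq> 1\<close> together with \<open>\<alpha> x ^ (q0 + 1) + \<beta> x ^ q0 + \<gamma> x + \<delta> = 0\<close>, the
  coefficients depending on \<open>s, r, v\<close>. The substitutions \<open>x \<mapsto> x + 1\<close> and \<open>x \<mapsto> 1 / x\<close>
  (the latter reverses the coefficients) reduce five of the six equations to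
  \<open>(u + 1) t ^ q0 + u t = 0\<close> with \<open>t \<noteq> 0\<close>, i.e. \<open>t ^ (q0 - 1) = u / (u + 1)\<close>. As
  \<open>gcd (q0 - 1) (q - 1) = 1\<close>, the map \<open>t \<mapsto> t ^ (q0 - 1)\<close> is a bijection of the field, so
  \<open>t = 1 + \<eta>\<close> is the only solution.\<close>

lemma power_card_minus_one_eq_1:
  fixes x :: "'a::{field,finite}"
  assumes "x \<noteq> 0"
  shows "x ^ (CARD('a) - 1) = 1"
proof -
  have "(\<Prod>y\<in>UNIV-{0}. x * y) = x ^ (CARD('a) - 1) * \<Prod>(UNIV-{0::'a})"
    by (simp add: prod.distrib card_Diff_singleton)
  also have "(\<Prod>y\<in>UNIV-{0}. x * y) = (\<Prod>y\<in>UNIV-{0::'a}. y)"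
    by (rule prod.reindex_bij_witness[of _ "\<lambda>y. y / x" "\<lambda>y. x * y"]) (use assms in auto)
  finally have "1 * \<Prod>(UNIV-{0::'a}) = x ^ (CARD('a) - 1) * \<Prod>(UNIV-{0::'a})"
    by simp
  moreover have "\<Prod>(UNIV-{0::'a}) \<noteq> 0"
    by simp
  ultimately show ?thesis
    by (metis mult_right_cancel)
qed

lemma CHAR_eq_2_if_card_power_of_2:
  assumes "CARD('a::{field,finite}) = 2 ^ f" and "f > 0"
  shows "CHAR('a) = 2"
proof -
  have "(-1::'a) ^ (CARD('a) - 1) = 1"
    by (rule power_card_minus_one_eq_1) simp
  moreover have "odd (CARD('a) - 1)"
    using assms by simp
  ultimately have "of_nat 2 = (0::'a)"
    by simp
  then have "CHAR('a) dvd 2"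
    by (simp only: of_nat_eq_0_iff_char_dvd)
  then show ?thesis
    using two_is_prime_nat unfolding prime_nat_iff by auto
qed

lemma bij_power_if_coprime_card:
  assumes "coprime n (CARD('a::{field,finite}) - 1)" and "n > 0"
  shows "bij (\<lambda>x::'a. x ^ n)"
proof -
  have "x = y" if "x ^ n = y ^ n" for x y :: 'a
  proof (cases "y = 0")
    case True
    then show ?thesis
      using that \<open>n > 0\<close> by (simp add: power_0_left)
  next
    case False
    define z where "z = x / y"
    have "z \<noteq> 0" and "z ^ n = 1"
      using that False \<open>n > 0\<close> by (auto simp: z_def power_divide power_0_left)
    obtain i j where ij: "n * i = (CARD('a) - 1) * j + 1"
      using bezout_nat[of n "CARD('a) - 1"] assms by auto
    have "(z ^ n) ^ i = z ^ ((CARD('a) - 1) * j + 1)"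
      by (simp only: ij flip: power_mult)
    also have "\<dots> = (z ^ (CARD('a) - 1)) ^ j * z"
      by (simp only: power_add power_mult power_one_right)
    finally have "(z ^ n) ^ i = (z ^ (CARD('a) - 1)) ^ j * z" .
    then have "z = 1"
      unfolding \<open>z ^ n = 1\<close> power_card_minus_one_eq_1[OF \<open>z \<noteq> 0\<close>] by simp
    then show ?thesis
      using False by (simp add: z_def)
  qed
  then have "inj (\<lambda>x::'a. x ^ n)"
    by (rule injI)
  then show ?thesis
    by (simp add: bij_def finite_UNIV_inj_surj[OF finite_class.finite_UNIV])
qed

lemma root_q0_eq_iff:
  fixes c :: "'a::{field,finite}"
  assumes "coprime (q0 - 1) (CARD('a) - 1)" and "q0 > 1"
  shows "y ^ (q0 - 1) = c \<longleftrightarrow> y = root_q0 q0 c"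
proof -
  have unique: "\<exists>!y. y ^ (q0 - 1) = c"
    using bij_power_if_coprime_card[OF assms(1)] assms(2) unfolding bij_iff by simp
  show ?thesis
  proof
    assume "y ^ (q0 - 1) = c"
    then show "y = root_q0 q0 c"
      unfolding root_q0_def by (rule the1_equality[OF unique, symmetric])
  next
    assume "y = root_q0 q0 c"
    then show "y ^ (q0 - 1) = c"
      unfolding root_q0_def using theI'[OF unique] by simp
  qed
qed

lemma coprime_diff_1_if_gcd_square_diff_1:
  fixes m n :: nat
  assumes "gcd m (n\<^sup>2 - 1) = 1"
  shows "coprime (n - 1) m"
proof -
  have "n\<^sup>2 - 1 = (n - 1) * (n + 1)"
    by (simp add: power2_eq_square algebra_simps)
  then have "coprime m ((n - 1) * (n + 1))"
    using assms by (simp add: coprime_iff_gcd_eq_1)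
  then show ?thesis
    using coprime_mult_right_iff coprime_commute by blast
qed

lemma add_self_CHAR_2:
  assumes "CHAR('a::ring_1) = 2"
  shows "x + x = (0::'a)"
  using uminus_CHAR_2[OF assms, of x] by (metis add.right_inverse)

lemma add_self_left_CHAR_2:
  assumes "CHAR('a::ring_1) = 2"
  shows "x + (x + y) = (y::'a)"
  by (simp add: add.assoc[symmetric] add_self_CHAR_2[OF assms])

lemma add_eq_0_iff_CHAR_2:
  assumes "CHAR('a::ring_1) = 2"
  shows "x + y = 0 \<longleftrightarrow> x = (y::'a)"
  using uminus_CHAR_2[OF assms, of y] by (metis add_eq_0_iff2)

lemma Phi_mult:
  fixes a b c d :: "'a::field"
  assumes "(a + b) ^ q0 = a ^ q0 + b ^ q0"
  shows "Phi q0 a c ** Phi q0 b d = Phi q0 (a + b) (c + d + a ^ q0 * b)"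
  using assms
  by (simp add: Phi_def matrix_matrix_mult_def vec_eq_iff forall_3 sum_3 algebra_simps)

lemma Phi_eq_iff: "Phi q0 a c = Phi q0 b d \<longleftrightarrow> a = b \<and> c = d"
proof
  assume "Phi q0 a c = Phi q0 b d"
  then have "Phi q0 a c $ 2 $ 1 = Phi q0 b d $ 2 $ 1" and "Phi q0 a c $ 3 $ 1 = Phi q0 b d $ 3 $ 1"
    by auto
  then show "a = b \<and> c = d"
    by (simp add: Phi_def)
qed simp

lemma Phi_0_0: "q0 > 0 \<Longrightarrow> Phi q0 0 0 = mat 1"
  by (simp add: Phi_def mat_def vec_eq_iff forall_3)

lemma matrix_inv_unique:
  fixes A B :: "'a::comm_ring_1^'n^'n"
  assumes "A ** B = mat 1" and "B ** A = mat 1"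
  shows "matrix_inv A = B"
proof -
  let ?C = "matrix_inv A"
  have C: "A ** ?C = mat 1 \<and> ?C ** A = mat 1"
    unfolding matrix_inv_def by (rule someI[of _ B]) (use assms in auto)
  have "?C = ?C ** (A ** B)"
    using assms by (simp add: matrix_mul_rid)
  also have "\<dots> = (?C ** A) ** B"
    by (simp add: matrix_mul_assoc)
  also have "\<dots> = B"
    using C by (simp add: matrix_mul_lid)
  finally show ?thesis .
qed

lemma matrix_inv_Phi:
  fixes b d :: "'a::field"
  assumes char: "CHAR('a) = 2" and "q0 > 0"
  shows "matrix_inv (Phi q0 b d) = Phi q0 b (d + b ^ (q0 + 1))"
proof (rule matrix_inv_unique)
  have "(b + b) ^ q0 = b ^ q0 + b ^ q0"
    using \<open>q0 > 0\<close> by (simp add: add_self_CHAR_2[OF char] power_0_left)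
  then have "Phi q0 b d' ** Phi q0 b d'' = Phi q0 0 (d' + d'' + b ^ (q0 + 1))" for d' d''
    by (simp add: Phi_mult add_self_CHAR_2[OF char] mult.commute)
  then show "Phi q0 b d ** Phi q0 b (d + b ^ (q0 + 1)) = mat 1"
    and "Phi q0 b (d + b ^ (q0 + 1)) ** Phi q0 b d = mat 1"
    using \<open>q0 > 0\<close> by (simp_all add: add_ac add_self_CHAR_2[OF char] add_self_left_CHAR_2[OF char] Phi_0_0)
qed

lemma arrow_Phi_iff:
  fixes a b c d v :: "'a::field"
  assumes char: "CHAR('a) = 2" and "q0 > 0" and "(a + b) ^ q0 = a ^ q0 + b ^ q0"
  shows "arrow q0 v (Phi q0 a c) (Phi q0 b d) \<longleftrightarrow>
    a \<noteq> b \<and> c + d + b ^ (q0 + 1) + a ^ q0 * b = v * (a + b) ^ (q0 + 1)"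
  using assms add_eq_0_iff_CHAR_2[OF char, of a b]
  by (auto simp: arrow_def Omega_def matrix_inv_Phi Phi_mult Phi_eq_iff add.assoc)

definition qpoly :: "nat \<Rightarrow> 'a::comm_ring_1 \<Rightarrow> 'a \<Rightarrow> 'a \<Rightarrow> 'a \<Rightarrow> 'a \<Rightarrow> 'a" where
  "qpoly q0 \<alpha> \<beta> \<gamma> \<delta> x = \<alpha> * x ^ (q0 + 1) + \<beta> * x ^ q0 + \<gamma> * x + \<delta>"

lemma arrow_Phi_scaled_iff:
  fixes a b s r v :: "'a::field"
  assumes char: "CHAR('a) = 2" and "q0 > 0"
    and frobenius: "\<And>x y::'a. (x + y) ^ q0 = x ^ q0 + y ^ q0"
    and "a \<noteq> 0" and "b \<noteq> 0"
  shows "arrow q0 v (Phi q0 a (s * a ^ (q0 + 1))) (Phi q0 b (r * b ^ (q0 + 1))) \<longleftrightarrow>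
    a / b \<noteq> 1 \<and> qpoly q0 (s + v) (1 + v) v (r + 1 + v) (a / b) = 0"
proof -
  define x where "x = a / b"
  have a: "a = x * b" and ab: "a + b = (x + 1) * b"
    using \<open>b \<noteq> 0\<close> by (simp_all add: x_def field_simps)
  have "(x + 1) ^ (q0 + 1) = x ^ (q0 + 1) + x ^ q0 + x + 1"
    using frobenius[of x 1] by (simp add: algebra_simps)
  then have ab_power: "(a + b) ^ (q0 + 1) = (x ^ (q0 + 1) + x ^ q0 + x + 1) * b ^ (q0 + 1)"
    by (simp only: ab power_mult_distrib)
  have "arrow q0 v (Phi q0 a (s * a ^ (q0 + 1))) (Phi q0 b (r * b ^ (q0 + 1))) \<longleftrightarrow>
      a \<noteq> b \<and> s * a ^ (q0 + 1) + r * b ^ (q0 + 1) + b ^ (q0 + 1) + a ^ q0 * b = v * (a + b) ^ (q0 + 1)"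
    (is "_ \<longleftrightarrow> _ \<and> ?lhs = ?rhs")
    by (rule arrow_Phi_iff[OF char \<open>q0 > 0\<close> frobenius])
  also have "?lhs = ?rhs \<longleftrightarrow> ?lhs + ?rhs = 0"
    by (rule add_eq_0_iff_CHAR_2[OF char, symmetric])
  also have "?lhs + ?rhs = b ^ (q0 + 1) * qpoly q0 (s + v) (1 + v) v (r + 1 + v) x"
    unfolding ab_power by (simp add: a qpoly_def power_mult_distrib algebra_simps)
  also have "a \<noteq> b \<longleftrightarrow> x \<noteq> 1"
    using \<open>b \<noteq> 0\<close> by (simp add: x_def)
  finally show ?thesis
    using \<open>b \<noteq> 0\<close> by (simp add: x_def)
qed

lemma qpoly_shift:
  fixes x :: "'a::comm_ring_1"
  assumes "(x + 1) ^ q0 = x ^ q0 + 1"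
  shows "qpoly q0 \<alpha> \<beta> \<gamma> \<delta> (x + 1) = qpoly q0 \<alpha> (\<alpha> + \<beta>) (\<alpha> + \<gamma>) (\<alpha> + \<beta> + \<gamma> + \<delta>) x"
  using assms by (simp add: qpoly_def algebra_simps)

lemma qpoly_reflect:
  fixes x :: "'a::field"
  assumes "x \<noteq> 0"
  shows "qpoly q0 \<alpha> \<beta> \<gamma> \<delta> x = x ^ (q0 + 1) * qpoly q0 \<delta> \<gamma> \<beta> \<alpha> (1 / x)"
  using assms by (simp add: qpoly_def power_one_over field_simps)

locale eta_setting =
  fixes q0 :: nat and u \<eta> :: "'a::field"
  assumes CHAR_2: "CHAR('a) = 2"
    and frobenius: "\<And>x y::'a. (x + y) ^ q0 = x ^ q0 + y ^ q0"
    and q0_pos: "q0 > 0"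
    and u_ne_0: "u \<noteq> 0" and u_ne_1: "u \<noteq> 1"
    and root_eq_iff: "\<And>t. t ^ (q0 - 1) = u / (u + 1) \<longleftrightarrow> t = 1 + \<eta>"
begin

lemma two_eq_0: "(2::'a) = 0"
  using of_nat_CHAR[where 'a='a] CHAR_2 by simp

lemma frobenius_plus_1: "(x + 1) ^ q0 = x ^ q0 + (1::'a)"
  using frobenius[of x 1] by simp

lemma u_plus_1_ne_0: "u + 1 \<noteq> 0"
  using u_ne_1 by (simp add: add_eq_0_iff_CHAR_2[OF CHAR_2])

lemma eta_ne_0: "\<eta> \<noteq> 0"
proof
  assume "\<eta> = 0"
  then have "u / (u + 1) = 1"
    using root_eq_iff[of 1] by simp
  then show False
    using u_plus_1_ne_0 by (simp add: divide_eq_1_iff)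
qed

lemma one_plus_eta_ne_0: "1 + \<eta> \<noteq> 0"
proof
  assume "1 + \<eta> = 0"
  then have "0 ^ (q0 - 1) = u / (u + 1)"
    using root_eq_iff[of 0] by simp
  then show False
    using u_ne_0 u_plus_1_ne_0 by (simp add: power_0_left divide_eq_1_iff split: if_splits)
qed

lemma qpoly_root_iff: "t \<noteq> 0 \<and> qpoly q0 0 (u + 1) u 0 t = 0 \<longleftrightarrow> t = 1 + \<eta>"
proof (cases "t = 0")
  case False
  have "t ^ q0 = t * t ^ (q0 - 1)"
    using q0_pos by (simp flip: power_Suc)
  then have "qpoly q0 0 (u + 1) u 0 t = t * ((u + 1) * t ^ (q0 - 1) + u)"
    by (simp add: qpoly_def algebra_simps)
  also have "\<dots> = 0 \<longleftrightarrow> (u + 1) * t ^ (q0 - 1) = u"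
    using False by (simp add: add_eq_0_iff_CHAR_2[OF CHAR_2])
  also have "\<dots> \<longleftrightarrow> t ^ (q0 - 1) = u / (u + 1)"
    using u_plus_1_ne_0 by (simp add: eq_divide_eq mult.commute)
  also have "\<dots> \<longleftrightarrow> t = 1 + \<eta>"
    by (rule root_eq_iff)
  finally show ?thesis
    using False by simp
qed (use one_plus_eta_ne_0 in auto)

lemma qpoly_root_ne_1_iff:
  assumes "x \<noteq> 0"
  shows "x \<noteq> 1 \<and> qpoly q0 0 (u + 1) u 0 x = 0 \<longleftrightarrow> x = 1 + \<eta>"
  using assms qpoly_root_iff[of x] eta_ne_0 by auto

lemma qpoly_shift_1:
  fixes x :: 'a
  assumes "\<beta> + \<gamma> = 1"
  shows "qpoly q0 0 \<beta> \<gamma> 1 x = qpoly q0 0 \<beta> \<gamma> 0 (x + 1)"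
  using assms by (simp add: qpoly_shift[OF frobenius_plus_1])

lemma shifted_qpoly_root_iff: "x \<noteq> 1 \<and> qpoly q0 0 (u + 1) u 1 x = 0 \<longleftrightarrow> x = \<eta>"
proof -
  have "x \<noteq> 1 \<and> qpoly q0 0 (u + 1) u 1 x = 0 \<longleftrightarrow>
      x + 1 \<noteq> 0 \<and> qpoly q0 0 (u + 1) u 0 (x + 1) = 0"
    by (simp add: qpoly_shift_1 two_eq_0 add_eq_0_iff_CHAR_2[OF CHAR_2])
  also have "\<dots> \<longleftrightarrow> x + 1 = 1 + \<eta>"
    by (rule qpoly_root_iff)
  finally show ?thesis
    by (simp add: add.commute)
qed

lemma swapped_qpoly_root_iff: "x \<noteq> 1 \<and> qpoly q0 0 u (u + 1) 1 x = 0 \<longleftrightarrow> x = \<eta> / (1 + \<eta>)"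
proof -
  have "x \<noteq> 1 \<and> qpoly q0 0 u (u + 1) 1 x = 0 \<longleftrightarrow>
      x + 1 \<noteq> 0 \<and> qpoly q0 0 (u + 1) u 0 (1 / (x + 1)) = 0"
    by (auto simp: qpoly_shift_1 two_eq_0 add_eq_0_iff_CHAR_2[OF CHAR_2] qpoly_reflect[of "x + 1"])
  also have "\<dots> \<longleftrightarrow> 1 / (x + 1) = 1 + \<eta>"
    using qpoly_root_iff[of "1 / (x + 1)"] by simp
  also have "\<dots> \<longleftrightarrow> x + 1 = 1 / (1 + \<eta>)"
    by (metis inverse_eq_divide inverse_inverse_eq)
  also have "1 / (1 + \<eta>) = \<eta> / (1 + \<eta>) + 1"
    using one_plus_eta_ne_0 by (simp add: field_simps two_eq_0)
  finally show ?thesis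
    by simp
qed

lemma reflected_shifted_qpoly_root_iff:
  assumes "x \<noteq> 0"
  shows "x \<noteq> 1 \<and> qpoly q0 1 u (u + 1) 0 x = 0 \<longleftrightarrow> 1 / x = \<eta>"
  using assms shifted_qpoly_root_iff[of "1 / x"] by (simp add: qpoly_reflect[of x])

lemma reflected_swapped_qpoly_root_iff:
  assumes "x \<noteq> 0"
  shows "x \<noteq> 1 \<and> qpoly q0 1 (u + 1) u 0 x = 0 \<longleftrightarrow> 1 / x = \<eta> / (1 + \<eta>)"
  using assms swapped_qpoly_root_iff[of "1 / x"] by (simp add: qpoly_reflect[of x])

lemma arrow_Omega_qpoly_iffs:
  assumes "a \<noteq> 0" and "b \<noteq> 0"
  shows "arrow q0 u (Phi q0 a (u * a ^ (q0 + 1))) (Phi q0 b (u * b ^ (q0 + 1))) \<longleftrightarrow>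
      a / b \<noteq> 1 \<and> qpoly q0 0 (u + 1) u 1 (a / b) = 0"
    and "arrow q0 (u + 1) (Phi q0 a (u * a ^ (q0 + 1))) (Phi q0 b (u * b ^ (q0 + 1))) \<longleftrightarrow>
      a / b \<noteq> 1 \<and> qpoly q0 1 u (u + 1) 0 (a / b) = 0"
    and "arrow q0 u (Phi q0 a ((u + 1) * a ^ (q0 + 1))) (Phi q0 b ((u + 1) * b ^ (q0 + 1))) \<longleftrightarrow>
      a / b \<noteq> 1 \<and> qpoly q0 1 (u + 1) u 0 (a / b) = 0"
    and "arrow q0 (u + 1) (Phi q0 a ((u + 1) * a ^ (q0 + 1))) (Phi q0 b ((u + 1) * b ^ (q0 + 1))) \<longleftrightarrow>
      a / b \<noteq> 1 \<and> qpoly q0 0 u (u + 1) 1 (a / b) = 0"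
    and "arrow q0 u (Phi q0 a (u * a ^ (q0 + 1))) (Phi q0 b ((u + 1) * b ^ (q0 + 1))) \<longleftrightarrow>
      a / b \<noteq> 1 \<and> qpoly q0 0 (u + 1) u 0 (a / b) = 0"
    and "arrow q0 (u + 1) (Phi q0 a (u * a ^ (q0 + 1))) (Phi q0 b ((u + 1) * b ^ (q0 + 1))) \<longleftrightarrow>
      a / b \<noteq> 1 \<and> qpoly q0 1 u (u + 1) 1 (a / b) = 0"
  unfolding arrow_Phi_scaled_iff[OF CHAR_2 q0_pos frobenius assms] by (simp_all add: two_eq_0 add.commute)

lemma arrow_Omega_iffs:
  assumes "a \<noteq> 0" and "b \<noteq> 0"
  shows "(arrow q0 u (Phi q0 a (u * a ^ (q0 + 1))) (Phi q0 b (u * b ^ (q0 + 1))) \<longleftrightarrow> b = a / \<eta>) \<and>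
     (arrow q0 (u + 1) (Phi q0 a (u * a ^ (q0 + 1))) (Phi q0 b (u * b ^ (q0 + 1))) \<longleftrightarrow> b = a * \<eta>) \<and>
     (arrow q0 u (Phi q0 a ((u + 1) * a ^ (q0 + 1))) (Phi q0 b ((u + 1) * b ^ (q0 + 1)))
        \<longleftrightarrow> b = a * (\<eta> / (1 + \<eta>))) \<and>
     (arrow q0 (u + 1) (Phi q0 a ((u + 1) * a ^ (q0 + 1))) (Phi q0 b ((u + 1) * b ^ (q0 + 1)))
        \<longleftrightarrow> b = a * ((1 + \<eta>) / \<eta>)) \<and>
     (arrow q0 u (Phi q0 a (u * a ^ (q0 + 1))) (Phi q0 b ((u + 1) * b ^ (q0 + 1)))
        \<longleftrightarrow> b = a / (1 + \<eta>)) \<and>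
     (arrow q0 (u + 1) (Phi q0 a (u * a ^ (q0 + 1))) (Phi q0 b ((u + 1) * b ^ (q0 + 1)))
        \<longleftrightarrow> (a / b) ^ (q0 + 1) + u * (a / b) ^ q0 + (u + 1) * (a / b) + 1 = 0)"
proof -
  have x: "a / b \<noteq> 0"
    using assms by simp
  have ratios:
    "a / b = \<eta> \<longleftrightarrow> b = a / \<eta>"
    "1 / (a / b) = \<eta> \<longleftrightarrow> b = a * \<eta>"
    "1 / (a / b) = \<eta> / (1 + \<eta>) \<longleftrightarrow> b = a * (\<eta> / (1 + \<eta>))"
    "a / b = \<eta> / (1 + \<eta>) \<longleftrightarrow> b = a * ((1 + \<eta>) / \<eta>)"
    "a / b = 1 + \<eta> \<longleftrightarrow> b = a / (1 + \<eta>)"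
    using assms eta_ne_0 one_plus_eta_ne_0 by (auto simp: field_simps)
  have "qpoly q0 1 u (u + 1) 1 1 \<noteq> 0"
    by (simp add: qpoly_def two_eq_0)
  then have "a / b \<noteq> 1 \<and> qpoly q0 1 u (u + 1) 1 (a / b) = 0 \<longleftrightarrow>
      (a / b) ^ (q0 + 1) + u * (a / b) ^ q0 + (u + 1) * (a / b) + 1 = 0"
    by (auto simp: qpoly_def)
  then show ?thesis
    unfolding arrow_Omega_qpoly_iffs[OF assms] shifted_qpoly_root_iff swapped_qpoly_root_iff
      reflected_shifted_qpoly_root_iff[OF x] reflected_swapped_qpoly_root_iff[OF x]
      qpoly_root_ne_1_iff[OF x] ratios
    by blast
qed

end

theorem lemma6p1:
  fixes u :: "'a::{field, finite}" and f q0 :: nat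
  assumes q: "CARD('a) = 2 ^ f" and f4: "f \<ge> 4"
    and q0pow: "\<exists>k. q0 = 2 ^ k" and q0lt: "q0 < CARD('a)"
    and gcd: "gcd (CARD('a) - 1) (q0\<^sup>2 - 1) = 1"
    and u0: "u \<noteq> 0" and u1: "u \<noteq> 1"
  defines "\<eta> \<equiv> 1 + root_q0 q0 (u / (u + 1))"
  shows "\<forall>a b. a \<noteq> 0 \<longrightarrow> b \<noteq> 0 \<longrightarrow>
     (arrow q0 u (Phi q0 a (u * a ^ (q0 + 1))) (Phi q0 b (u * b ^ (q0 + 1))) \<longleftrightarrow> b = a / \<eta>) \<and>
     (arrow q0 (u + 1) (Phi q0 a (u * a ^ (q0 + 1))) (Phi q0 b (u * b ^ (q0 + 1))) \<longleftrightarrow> b = a * \<eta>) \<and>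
     (arrow q0 u (Phi q0 a ((u + 1) * a ^ (q0 + 1))) (Phi q0 b ((u + 1) * b ^ (q0 + 1)))
        \<longleftrightarrow> b = a * (\<eta> / (1 + \<eta>))) \<and>
     (arrow q0 (u + 1) (Phi q0 a ((u + 1) * a ^ (q0 + 1))) (Phi q0 b ((u + 1) * b ^ (q0 + 1)))
        \<longleftrightarrow> b = a * ((1 + \<eta>) / \<eta>)) \<and>
     (arrow q0 u (Phi q0 a (u * a ^ (q0 + 1))) (Phi q0 b ((u + 1) * b ^ (q0 + 1)))
        \<longleftrightarrow> b = a / (1 + \<eta>)) \<and>
     (arrow q0 (u + 1) (Phi q0 a (u * a ^ (q0 + 1))) (Phi q0 b ((u + 1) * b ^ (q0 + 1)))
        \<longleftrightarrow> (a / b) ^ (q0 + 1) + u * (a / b) ^ q0 + (u + 1) * (a / b) + 1 = 0)"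
proof -
  have char: "CHAR('a) = 2"
    using CHAR_eq_2_if_card_power_of_2[OF q] f4 by simp
  obtain k where k: "q0 = 2 ^ k"
    using q0pow by blast
  have frobenius: "(x + y) ^ q0 = x ^ q0 + y ^ q0" for x y :: 'a
    using char by (intro freshmans_dream') (simp_all add: k)
  have "q0 \<noteq> 1" \<comment> \<open>otherwise \<open>q - 1 = gcd (q - 1) 0 = 1\<close>\<close>
    using gcd q f4 power_increasing[OF f4, of "2::nat"] by auto
  moreover have "q0 > 0"
    using k by simp
  ultimately have "q0 > 1"
    by simp
  have "coprime (q0 - 1) (CARD('a) - 1)"
    using gcd by (rule coprime_diff_1_if_gcd_square_diff_1)
  then have root: "t ^ (q0 - 1) = u / (u + 1) \<longleftrightarrow> t = 1 + \<eta>" for t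
    using root_q0_eq_iff \<open>q0 > 1\<close> by (simp add: \<eta>_def add_self_left_CHAR_2[OF char])
  interpret eta_setting q0 u \<eta>
    using char frobenius \<open>q0 > 1\<close> u0 u1 root by unfold_locales auto
  show ?thesis
    using arrow_Omega_iffs by simp
qed

end
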